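(* Let $M\geq 1$ and let $r$ be a DSIC mechanism in the bilateral cooperation model described in the context, with competitive ratio $\alpha$. For $d\in\{1,\dots,M\}$ let $B_*^d$ be the set of submodular vectors $b\in\mathbb{R}^M$ with $b_1\geq\cdots\geq b_d>0\geq b_{d+1}\geq\cdots\geq b_M$. Let $s^*\in\mathbb{R}^M$ be given by $s^*_i=i$ for all $i$. Then for every $d\in\{1,\dots,M\}$ and every $b\in B_*^d$: $$\sum_{i=1}^d r_i(b,s^* )\, b_i\ \geq\ \alpha\cdot\sum_{i=1}^d \frac{b_i}{i}.$$
   Context: Bilateral cooperation model: there are two agents, a buyer and a seller, and options $0,1,\dots,M$. A buyer utility vector is $b=(b_1,\dots,b_M)\in\mathbb{R}^M$ and a seller utility vector is $s=(s_1,\dots,s_M)\in\mathbb{R}^M$; by convention $b_0=s_0=0$. A vector $v=(v_1,\dots,v_M)$ (with $v_0=0$) is submodular if $v_{i+1}-v_i\leq v_i-v_{i-1}$ for every $i\in\{1,\dots,M-1\}$. Define $\mathrm{Feasible}(b,s)=\{i\in\{0,\dots,M\}: b_i\geq 0 \text{ and } s_i\geq 0\}$ and $OPT(b,s)=\max_{i\in \mathrm{Feasible}(b,s)}(b_i+s_i)$. A mechanism is a function $r$ mapping each pair of reported vectors $(b',s')$ to a probability vector $(r_0(b',s'),\dots,r_M(b',s'))$. The mechanism $r$ is DSIC if for all $b,b',s,s'$: $\sum_{i=1}^M r_i(b,s')\,b_i\geq \sum_{i=1}^M r_i(b',s')\,b_i$ and $\sum_{i=1}^M r_i(b',s)\,s_i\geq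 \sum_{i=1}^M r_i(b',s')\,s_i$. The gain at true vectors $(b,s)$ is $G_r(b,s)=\sum_{i=1}^M r_i(b,s)(b_i+s_i)$, and the competitive ratio is $C_r=\min_{b,s} G_r(b,s)/OPT(b,s)$; "competitive ratio $\alpha$" means $C_r=\alpha$. *)

theory Defs
  imports Complex_Main
begin

text \<open>Utility vectors in R^M are represented as functions nat => real, where
  only the entries 1..M matter; we require all other entries (in particular
  the entry 0, by the convention b_0 = 0) to be zero.\<close>

definition vecs :: "nat \<Rightarrow> (nat \<Rightarrow> real) set" where
  "vecs M = {v. \<forall>i. (i = 0 \<or> M < i) \<longrightarrow> v i = 0}"

definition submodular :: "nat \<Rightarrow> (nat \<Rightarrow> real) \<Rightarrow> bool" where
  "submodular M v \<longleftrightarrow> (\<forall>i\<in>{1..<M}. v (Suc i) - v i \<le> v i - v (i - 1))"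

definition Feasible :: "nat \<Rightarrow> (nat \<Rightarrow> real) \<Rightarrow> (nat \<Rightarrow> real) \<Rightarrow> nat set" where
  "Feasible M b s = {i\<in>{0..M}. b i \<ge> 0 \<and> s i \<ge> 0}"

definition OPT :: "nat \<Rightarrow> (nat \<Rightarrow> real) \<Rightarrow> (nat \<Rightarrow> real) \<Rightarrow> real" where
  "OPT M b s = Max ((\<lambda>i. b i + s i) ` Feasible M b s)"

definition mechanism :: "nat \<Rightarrow> ((nat \<Rightarrow> real) \<Rightarrow> (nat \<Rightarrow> real) \<Rightarrow> nat \<Rightarrow> real) \<Rightarrow> bool" where
  "mechanism M r \<longleftrightarrow> (\<forall>b\<in>vecs M. \<forall>s\<in>vecs M.
      (\<forall>i\<in>{0..M}. r b s i \<ge> 0) \<and> (\<Sum>i=0..M. r b s i) = 1)"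

definition DSIC :: "nat \<Rightarrow> ((nat \<Rightarrow> real) \<Rightarrow> (nat \<Rightarrow> real) \<Rightarrow> nat \<Rightarrow> real) \<Rightarrow> bool" where
  "DSIC M r \<longleftrightarrow> (\<forall>b\<in>vecs M. \<forall>b'\<in>vecs M. \<forall>s\<in>vecs M. \<forall>s'\<in>vecs M.
      (\<Sum>i=1..M. r b s' i * b i) \<ge> (\<Sum>i=1..M. r b' s' i * b i) \<and>
      (\<Sum>i=1..M. r b' s i * s i) \<ge> (\<Sum>i=1..M. r b' s' i * s i))"

definition gain :: "nat \<Rightarrow> ((nat \<Rightarrow> real) \<Rightarrow> (nat \<Rightarrow> real) \<Rightarrow> nat \<Rightarrow> real) \<Rightarrow>
    (nat \<Rightarrow> real) \<Rightarrow> (nat \<Rightarrow> real) \<Rightarrow> real" where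
  "gain M r b s = (\<Sum>i=1..M. r b s i * (b i + s i))"

text \<open>Competitive ratio: infimum of G/OPT over all true vector pairs with OPT > 0
  (the ratio is undefined when OPT = 0).\<close>
definition has_competitive_ratio :: "nat \<Rightarrow> ((nat \<Rightarrow> real) \<Rightarrow> (nat \<Rightarrow> real) \<Rightarrow> nat \<Rightarrow> real) \<Rightarrow> real \<Rightarrow> bool" where
  "has_competitive_ratio M r \<alpha> \<longleftrightarrow>
     (\<forall>b\<in>vecs M. \<forall>s\<in>vecs M. OPT M b s > 0 \<longrightarrow> \<alpha> \<le> gain M r b s / OPT M b s) \<and>
     (\<forall>\<beta>. (\<forall>b\<in>vecs M. \<forall>s\<in>vecs M. OPT M b s > 0 \<longrightarrow> \<beta> \<le> gain M r b s / OPT M b s) \<longrightarrow> \<beta> \<le> \<alpha>)"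

definition B_star :: "nat \<Rightarrow> nat \<Rightarrow> (nat \<Rightarrow> real) set" where
  "B_star M d = {b\<in>vecs M. submodular M b \<and> (\<forall>i\<in>{1..<M}. b (Suc i) \<le> b i) \<and>
      b d > 0 \<and> (d < M \<longrightarrow> b (Suc d) \<le> 0)}"

definition s_star :: "nat \<Rightarrow> nat \<Rightarrow> real" where
  "s_star M i = (if 1 \<le> i \<and> i \<le> M then real i else 0)"

end

theory Submission
  imports Defs
begin

text \<open>Fix the seller report s* (s*_i = i) and induct on d, using that submodularity makes
  b_i / i non-increasing. For d = 1 the buyer misreports K b with K large: option 1 is then feasible
  with value K b_1 + 1, so the competitive ratio forces r(K b, s*) to give b almost \<alpha> b_1, and by
  DSIC truthful reporting gives at least as much. For d > 1 write b = c + \<mu> s* with \<mu> = b_d / d;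
  then c_d = 0 and c satisfies the hypotheses for d - 1. Under the report \<epsilon> c with \<epsilon> \<rightarrow> 0
  option d stays feasible with value d, so the seller's share is at least about \<alpha> d, while by DSIC
  the report \<epsilon> c is worth as much to c as a truthful one; the buyer b = c + \<mu> s* collects both.\<close>

definition expected_value :: "nat \<Rightarrow> (nat \<Rightarrow> real) \<Rightarrow> (nat \<Rightarrow> real) \<Rightarrow> real" where
  "expected_value M p v = (\<Sum>i=1..M. p i * v i)"

lemma expected_value_scale:
  "expected_value M p (\<lambda>i. e * v i) = e * expected_value M p v"
  unfolding expected_value_def by (simp add: sum_distrib_left mult.left_commute)

lemma expected_value_add:
  "expected_value M p (\<lambda>i. v i + w i) = expected_value M p v + expected_value M p w"
  unfolding expected_value_def by (simp add: distrib_left sum.distrib)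

lemma gain_eq_expected_values:
  "gain M r b s = expected_value M (r b s) b + expected_value M (r b s) s"
  unfolding gain_def expected_value_add[symmetric] by (simp add: expected_value_def)

lemma s_star_in_vecs: "s_star M \<in> vecs M"
  unfolding vecs_def s_star_def by auto

lemma vecs_scale: "v \<in> vecs M \<Longrightarrow> (\<lambda>i. e * v i) \<in> vecs M"
  unfolding vecs_def by auto

lemma vecs_add: "v \<in> vecs M \<Longrightarrow> w \<in> vecs M \<Longrightarrow> (\<lambda>i. v i + w i) \<in> vecs M"
  unfolding vecs_def by auto

lemma vecs_diff: "v \<in> vecs M \<Longrightarrow> w \<in> vecs M \<Longrightarrow> (\<lambda>i. v i - w i) \<in> vecs M"
  unfolding vecs_def by auto

lemma DSIC_buyer:
  assumes "DSIC M r" "b \<in> vecs M" "b' \<in> vecs M" "s \<in> vecs M"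
  shows "expected_value M (r b' s) b \<le> expected_value M (r b s) b"
  using assms unfolding DSIC_def expected_value_def by blast

lemma DSIC_buyer_scale_invariant:
  assumes "DSIC M r" "c \<in> vecs M" "s \<in> vecs M" "0 < \<epsilon>"
  shows "expected_value M (r (\<lambda>i. \<epsilon> * c i) s) c = expected_value M (r c s) c"
proof -
  have ec: "(\<lambda>i. \<epsilon> * c i) \<in> vecs M" using assms(2) by (rule vecs_scale)
  have "\<epsilon> * expected_value M (r c s) c \<le> \<epsilon> * expected_value M (r (\<lambda>i. \<epsilon> * c i) s) c"
    using DSIC_buyer[OF assms(1) ec assms(2,3)] by (simp add: expected_value_scale)
  then show ?thesis
    using DSIC_buyer[OF assms(1,2) ec assms(3)] \<open>0 < \<epsilon>\<close> by simp
qed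

lemma expected_value_le_bound:
  assumes "mechanism M r" "b \<in> vecs M" "s \<in> vecs M" "\<forall>i\<in>{1..M}. s i \<le> m" "0 \<le> m"
  shows "expected_value M (r b s) s \<le> m"
proof -
  have nonneg: "\<forall>i\<in>{0..M}. 0 \<le> r b s i" and total: "(\<Sum>i=0..M. r b s i) = 1"
    using assms(1-3) unfolding mechanism_def by auto
  have "expected_value M (r b s) s \<le> (\<Sum>i=1..M. r b s i) * m"
    unfolding expected_value_def sum_distrib_right
    by (rule sum_mono) (use nonneg assms(4) in \<open>auto intro: mult_left_mono\<close>)
  also have "(\<Sum>i=1..M. r b s i) \<le> (\<Sum>i=0..M. r b s i)"
    by (rule sum_mono2) (use nonneg in auto)
  finally show ?thesis using total \<open>0 \<le> m\<close> by (simp add: mult_right_mono)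
qed

lemma gain_ge_feasible:
  assumes "has_competitive_ratio M r \<alpha>" "0 \<le> \<alpha>" "b \<in> vecs M" "s \<in> vecs M"
    and "j \<in> Feasible M b s" "0 < b j + s j"
  shows "\<alpha> * (b j + s j) \<le> gain M r b s"
proof -
  have "finite (Feasible M b s)" unfolding Feasible_def by auto
  then have opt: "b j + s j \<le> OPT M b s" unfolding OPT_def using assms(5) by auto
  then have "\<alpha> \<le> gain M r b s / OPT M b s"
    using assms(1,3,4,6) unfolding has_competitive_ratio_def by auto
  then have "\<alpha> * OPT M b s \<le> gain M r b s" using opt assms(6) by (simp add: pos_le_divide_eq)
  moreover have "\<alpha> * (b j + s j) \<le> \<alpha> * OPT M b s" using opt assms(2) by (rule mult_left_mono)
  ultimately show ?thesis by linarith
qed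

lemma le_if_le_plus_pos_mult:
  fixes a b c :: real
  assumes "\<And>\<epsilon>. 0 < \<epsilon> \<Longrightarrow> a \<le> b + \<epsilon> * c"
  shows "a \<le> b"
proof (cases "c \<le> 0")
  case True
  then show ?thesis using assms[of 1] by simp
next
  case False
  show ?thesis
  proof (rule field_le_epsilon)
    fix e :: real assume "0 < e"
    then show "a \<le> b + e" using assms[of "e / c"] False by simp
  qed
qed

lemma utility_ge_first_entry:
  assumes mech: "mechanism M r" and dsic: "DSIC M r" and cr: "has_competitive_ratio M r \<alpha>"
    and "0 \<le> \<alpha>" "1 \<le> M" and b: "b \<in> vecs M" and "0 \<le> b 1"
  shows "\<alpha> * b 1 \<le> expected_value M (r b (s_star M)) b"
proof (rule le_if_le_plus_pos_mult[where c = "real M"])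
  fix \<epsilon> :: real assume "0 < \<epsilon>"
  define K where "K = 1 / \<epsilon>"
  define x where "x = (\<lambda>i. K * b i)"
  define s where "s = s_star M"
  have x: "x \<in> vecs M" unfolding x_def using b by (rule vecs_scale)
  have s: "s \<in> vecs M" unfolding s_def by (rule s_star_in_vecs)
  have "0 < K" unfolding K_def using \<open>0 < \<epsilon>\<close> by simp
  have x1: "x 1 + s 1 = K * b 1 + 1" unfolding x_def s_def s_star_def using \<open>1 \<le> M\<close> by simp
  have pos: "0 < x 1 + s 1"
    unfolding x1 using \<open>0 < K\<close> \<open>0 \<le> b 1\<close> by (intro add_nonneg_pos mult_nonneg_nonneg) auto
  have "1 \<in> Feasible M x s"
    using \<open>1 \<le> M\<close> \<open>0 < K\<close> \<open>0 \<le> b 1\<close> unfolding Feasible_def by (auto simp: x_def s_def s_star_def)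
  then have "\<alpha> * (x 1 + s 1) \<le> gain M r x s"
    using pos by (rule gain_ge_feasible[OF cr \<open>0 \<le> \<alpha>\<close> x s])
  then have "\<alpha> * (K * b 1 + 1) \<le> gain M r x s" unfolding x1 .
  also have "\<dots> = K * expected_value M (r x s) b + expected_value M (r x s) s"
    unfolding gain_eq_expected_values by (simp add: x_def expected_value_scale)
  also have "\<dots> \<le> K * expected_value M (r b s) b + real M"
    using DSIC_buyer[OF dsic b x s] \<open>0 < K\<close>
      expected_value_le_bound[OF mech x s, of "real M"]
    by (intro add_mono mult_left_mono) (auto simp: s_def s_star_def)
  finally have "K * (\<alpha> * b 1) \<le> K * expected_value M (r b s) b + real M"
    using \<open>0 \<le> \<alpha>\<close> by (simp add: algebra_simps)
  then show "\<alpha> * b 1 \<le> expected_value M (r b (s_star M)) b + \<epsilon> * real M"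
    using \<open>0 < \<epsilon>\<close> unfolding K_def s_def by (simp add: field_simps)
qed

lemma utility_ge_shifted:
  assumes dsic: "DSIC M r" and cr: "has_competitive_ratio M r \<alpha>" and "0 \<le> \<alpha>"
    and c: "c \<in> vecs M" and "1 \<le> D" "D \<le> M" "c D = 0" "0 \<le> \<mu>"
  defines "s \<equiv> s_star M"
  defines "b \<equiv> (\<lambda>i. c i + \<mu> * s i)"
  shows "expected_value M (r c s) c + \<mu> * (\<alpha> * real D) \<le> expected_value M (r b s) b"
proof (rule le_if_le_plus_pos_mult[where c = "\<mu> * expected_value M (r c s) c"])
  fix \<epsilon> :: real assume "0 < \<epsilon>"
  define x where "x = (\<lambda>i. \<epsilon> * c i)"
  have s: "s \<in> vecs M" unfolding s_def by (rule s_star_in_vecs)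
  have x: "x \<in> vecs M" unfolding x_def using c by (rule vecs_scale)
  have b: "b \<in> vecs M" unfolding b_def using c vecs_scale[OF s] by (rule vecs_add)
  have xD: "x D + s D = real D" unfolding x_def s_def s_star_def using assms(5-7) by simp
  have "D \<in> Feasible M x s" "0 < x D + s D"
    using assms(5-7) xD unfolding Feasible_def by (auto simp: x_def)
  then have "\<alpha> * (x D + s D) \<le> gain M r x s" by (rule gain_ge_feasible[OF cr \<open>0 \<le> \<alpha>\<close> x s])
  then have "\<alpha> * real D \<le> gain M r x s" unfolding xD .
  also have "\<dots> = \<epsilon> * expected_value M (r c s) c + expected_value M (r x s) s"
    unfolding gain_eq_expected_values x_def expected_value_scale
    using DSIC_buyer_scale_invariant[OF dsic c s \<open>0 < \<epsilon>\<close>] by simp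
  finally have seller_share:
    "\<alpha> * real D - \<epsilon> * expected_value M (r c s) c \<le> expected_value M (r x s) s"
    by simp
  have "expected_value M (r c s) c + \<mu> * (\<alpha> * real D - \<epsilon> * expected_value M (r c s) c)
      \<le> expected_value M (r x s) c + \<mu> * expected_value M (r x s) s"
    using DSIC_buyer_scale_invariant[OF dsic c s \<open>0 < \<epsilon>\<close>] seller_share \<open>0 \<le> \<mu>\<close>
    unfolding x_def by (simp add: mult_left_mono)
  also have "\<dots> = expected_value M (r x s) b"
    unfolding b_def expected_value_add expected_value_scale ..
  also have "\<dots> \<le> expected_value M (r b s) b" using DSIC_buyer[OF dsic b x s] .
  finally show "expected_value M (r c s) c + \<mu> * (\<alpha> * real D)
      \<le> expected_value M (r b s) b + \<epsilon> * (\<mu> * expected_value M (r c s) c)"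
    by (simp add: algebra_simps)
qed

definition ratio_admissible :: "nat \<Rightarrow> nat \<Rightarrow> (nat \<Rightarrow> real) \<Rightarrow> bool" where
  "ratio_admissible M d b \<longleftrightarrow>
     (\<forall>i j. 1 \<le> i \<longrightarrow> i \<le> j \<longrightarrow> j \<le> d \<longrightarrow> b j / real j \<le> b i / real i) \<and> 0 \<le> b d \<and>
     (\<forall>i. d < i \<longrightarrow> i \<le> M \<longrightarrow> b i / real i \<le> b d / real d)"

lemma ratio_admissible_shift:
  assumes adm: "ratio_admissible M (Suc n) b" and "1 \<le> n" "Suc n \<le> M"
  defines "\<mu> \<equiv> b (Suc n) / real (Suc n)"
  shows "ratio_admissible M n (\<lambda>i. b i - \<mu> * s_star M i)"
proof -
  define c where "c = (\<lambda>i. b i - \<mu> * s_star M i)"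
  have c_ratio: "c i / real i = b i / real i - \<mu>" if "1 \<le> i" "i \<le> M" for i
    using that unfolding c_def s_star_def by (simp add: field_simps)
  have "\<mu> \<le> b n / real n"
    using adm \<open>1 \<le> n\<close> unfolding ratio_admissible_def \<mu>_def by (meson le_SucI order_refl)
  then have cn: "0 \<le> c n / real n" using c_ratio \<open>1 \<le> n\<close> \<open>Suc n \<le> M\<close> by simp
  have "c i / real i \<le> c n / real n" if "n < i" "i \<le> M" for i
  proof (cases "i = Suc n")
    case True
    have "c (Suc n) = 0" unfolding c_def s_star_def \<mu>_def using \<open>Suc n \<le> M\<close> by simp
    with True show ?thesis using cn by simp
  next
    case False
    then have "b i / real i \<le> \<mu>" using adm that unfolding ratio_admissible_def \<mu>_def by auto
    then show ?thesis using c_ratio[of i] that cn by simp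
  qed
  moreover have "c j / real j \<le> c i / real i" if "1 \<le> i" "i \<le> j" "j \<le> n" for i j
    using adm that c_ratio[of i] c_ratio[of j] \<open>Suc n \<le> M\<close> unfolding ratio_admissible_def by auto
  moreover have "0 \<le> c n" using cn \<open>1 \<le> n\<close> by (simp add: zero_le_divide_iff)
  ultimately show ?thesis unfolding ratio_admissible_def c_def by blast
qed

lemma utility_ge_ratio_sum:
  assumes mech: "mechanism M r" and dsic: "DSIC M r" and cr: "has_competitive_ratio M r \<alpha>"
    and "0 \<le> \<alpha>" and "1 \<le> d"
  shows "d \<le> M \<Longrightarrow> b \<in> vecs M \<Longrightarrow> ratio_admissible M d b \<Longrightarrow>
    \<alpha> * (\<Sum>i=1..d. b i / real i) \<le> expected_value M (r b (s_star M)) b"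
  using \<open>1 \<le> d\<close>
proof (induction d arbitrary: b rule: nat_induct_at_least)
  case base
  then show ?case
    using utility_ge_first_entry[OF mech dsic cr \<open>0 \<le> \<alpha>\<close>] by (simp add: ratio_admissible_def)
next
  case (Suc n)
  define s where "s = s_star M"
  define \<mu> where "\<mu> = b (Suc n) / real (Suc n)"
  define c where "c = (\<lambda>i. b i - \<mu> * s i)"
  have c: "c \<in> vecs M" unfolding c_def s_def
    using Suc.prems(2) vecs_scale[OF s_star_in_vecs] by (rule vecs_diff)
  have "0 \<le> \<mu>" using Suc.prems(3) unfolding ratio_admissible_def \<mu>_def by simp
  have "c (Suc n) = 0" unfolding c_def s_def s_star_def \<mu>_def using Suc.prems(1) by simp
  have b_eq: "b = (\<lambda>i. c i + \<mu> * s i)" unfolding c_def by simp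
  have IH: "\<alpha> * (\<Sum>i=1..n. c i / real i) \<le> expected_value M (r c s) c"
    using Suc.IH[OF _ c] ratio_admissible_shift[OF Suc.prems(3) Suc.hyps] Suc.prems(1)
    unfolding c_def s_def \<mu>_def by simp
  have "(\<Sum>i=1..n. b i / real i) = (\<Sum>i=1..n. c i / real i + \<mu>)"
    by (rule sum.cong) (use Suc.prems(1) in \<open>auto simp: c_def s_def s_star_def field_simps\<close>)
  moreover have "(\<Sum>i=1..Suc n. b i / real i) = (\<Sum>i=1..n. b i / real i) + \<mu>"
    by (simp add: \<mu>_def)
  ultimately have "(\<Sum>i=1..Suc n. b i / real i) = (\<Sum>i=1..n. c i / real i) + \<mu> * real (Suc n)"
    by (simp add: sum.distrib algebra_simps)
  then have "\<alpha> * (\<Sum>i=1..Suc n. b i / real i)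
      = \<alpha> * (\<Sum>i=1..n. c i / real i) + \<mu> * (\<alpha> * real (Suc n))"
    by (simp add: algebra_simps)
  also have "\<dots> \<le> expected_value M (r c s) c + \<mu> * (\<alpha> * real (Suc n))"
    using IH by simp
  also have "\<dots> \<le> expected_value M (r b s) b"
    using utility_ge_shifted[OF dsic cr \<open>0 \<le> \<alpha>\<close> c _ Suc.prems(1) \<open>c (Suc n) = 0\<close> \<open>0 \<le> \<mu>\<close>]
    unfolding b_eq s_def by simp
  finally show ?case unfolding s_def .
qed

lemma antimono_on_interval_if_step:
  fixes f :: "nat \<Rightarrow> real"
  assumes "\<And>k. 1 \<le> k \<Longrightarrow> k < M \<Longrightarrow> f (Suc k) \<le> f k" and "1 \<le> i" "i \<le> j" "j \<le> M"
  shows "f j \<le> f i"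
  using \<open>i \<le> j\<close> \<open>j \<le> M\<close>
proof (induction j rule: dec_induct)
  case (step k)
  then show ?case using assms(1)[of k] \<open>1 \<le> i\<close> by simp
qed simp

lemma submodular_ratio_step:
  assumes "submodular M b" "b 0 = 0"
  shows "k < M \<Longrightarrow> real k * b (Suc k) \<le> real (Suc k) * b k"
proof (induction k)
  case (Suc k)
  then have "b (Suc (Suc k)) - b (Suc k) \<le> b (Suc k) - b k"
    using assms(1) unfolding submodular_def by (metis atLeastLessThan_iff diff_Suc_1 le_add1 plus_1_eq_Suc)
  then have "real (Suc k) * (b (Suc (Suc k)) - b (Suc k)) \<le> real (Suc k) * (b (Suc k) - b k)"
    by (intro mult_left_mono) auto
  then show ?case using Suc by (simp add: algebra_simps)
qed (simp add: assms(2))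

lemma submodular_ratio_antimono:
  assumes "submodular M b" "b 0 = 0" "1 \<le> i" "i \<le> j" "j \<le> M"
  shows "b j / real j \<le> b i / real i"
proof (rule antimono_on_interval_if_step[where f = "\<lambda>i. b i / real i"])
  fix k assume "1 \<le> k" "k < M"
  then show "b (Suc k) / real (Suc k) \<le> b k / real k"
    using submodular_ratio_step[OF assms(1,2)]
    by (simp add: divide_simps mult.commute del: of_nat_Suc)
qed (use assms in auto)

lemma B_star_antimono:
  assumes "b \<in> B_star M d" "1 \<le> i" "i \<le> j" "j \<le> M"
  shows "b j \<le> b i"
proof -
  have "\<forall>k\<in>{1..<M}. b (Suc k) \<le> b k" using assms(1) unfolding B_star_def by simp
  then show ?thesis by (intro antimono_on_interval_if_step[OF _ assms(2-4)]) simp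
qed

lemma B_star_sign:
  assumes "b \<in> B_star M d" "d \<le> M" "1 \<le> i" "i \<le> M"
  shows "i \<le> d \<Longrightarrow> 0 < b i" and "d < i \<Longrightarrow> b i \<le> 0"
proof -
  have "0 < b d" and tail: "d < M \<Longrightarrow> b (Suc d) \<le> 0" using assms(1) unfolding B_star_def by simp_all
  show "i \<le> d \<Longrightarrow> 0 < b i"
    using B_star_antimono[OF assms(1,3) _ assms(2)] \<open>0 < b d\<close> by fastforce
  show "d < i \<Longrightarrow> b i \<le> 0"
    using B_star_antimono[OF assms(1), of "Suc d" i] tail assms(4) by fastforce
qed

lemma B_star_ratio_admissible:
  assumes "b \<in> B_star M d" "1 \<le> d" "d \<le> M"
  shows "ratio_admissible M d b"
proof -
  have "b 0 = 0" and "submodular M b" and "0 < b d"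
    using assms(1) unfolding B_star_def vecs_def by auto
  then show ?thesis
    unfolding ratio_admissible_def using assms(2,3)
    by (auto intro: submodular_ratio_antimono[of M b] less_imp_le)
qed

lemma expected_value_le_prefix:
  assumes "mechanism M r" "b \<in> vecs M" "s \<in> vecs M" "d \<le> M"
    and "\<forall>i\<in>{d<..M}. b i \<le> 0"
  shows "expected_value M (r b s) b \<le> (\<Sum>i=1..d. r b s i * b i)"
proof -
  have "(\<Sum>i=Suc d..M. r b s i * b i) \<le> 0"
    using assms unfolding mechanism_def by (intro sum_nonpos mult_nonneg_nonpos) auto
  moreover have "expected_value M (r b s) b
      = (\<Sum>i=1..d. r b s i * b i) + (\<Sum>i=Suc d..M. r b s i * b i)"
    unfolding expected_value_def using assms(4) using sum.ub_add_nat[of 1 d _ "M - d"] assms(4) by simp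
  ultimately show ?thesis by linarith
qed

theorem lemma3:
  fixes M :: nat and r :: "(nat \<Rightarrow> real) \<Rightarrow> (nat \<Rightarrow> real) \<Rightarrow> nat \<Rightarrow> real" and \<alpha> :: real
  assumes "M \<ge> 1"
    and "mechanism M r"
    and "DSIC M r"
    and "has_competitive_ratio M r \<alpha>"
  shows "\<forall>d\<in>{1..M}. \<forall>b\<in>B_star M d.
           (\<Sum>i=1..d. r b (s_star M) i * b i) \<ge> \<alpha> * (\<Sum>i=1..d. b i / real i)"
proof (intro ballI)
  fix d b assume d: "d \<in> {1..M}" and bB: "b \<in> B_star M d"
  have b: "b \<in> vecs M" using bB unfolding B_star_def by simp
  have pos: "0 < b i" if "i \<in> {1..d}" for i using B_star_sign(1)[OF bB] d that by auto
  show "\<alpha> * (\<Sum>i=1..d. b i / real i) \<le> (\<Sum>i=1..d. r b (s_star M) i * b i)"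
  proof (cases "0 \<le> \<alpha>")
    case True
    have "\<alpha> * (\<Sum>i=1..d. b i / real i) \<le> expected_value M (r b (s_star M)) b"
      using utility_ge_ratio_sum[OF assms(2-4) True] B_star_ratio_admissible[OF bB] b d by simp
    also have "\<dots> \<le> (\<Sum>i=1..d. r b (s_star M) i * b i)"
      using expected_value_le_prefix[OF assms(2) b s_star_in_vecs] B_star_sign(2)[OF bB] d by simp
    finally show ?thesis .
  next
    case False
    have "\<alpha> * (\<Sum>i=1..d. b i / real i) \<le> 0"
      using False pos by (intro mult_nonpos_nonneg sum_nonneg) (auto intro: less_imp_le)
    also have "0 \<le> (\<Sum>i=1..d. r b (s_star M) i * b i)"
      using assms(2) b s_star_in_vecs pos d unfolding mechanism_def
      by (intro sum_nonneg mult_nonneg_nonneg) (auto intro: less_imp_le)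
    finally show ?thesis .
  qed
qed

end
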